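(* For every $H\in(0,1]$ there exists a positive number $\alpha_H>0$ such that \[ E\, e^{\delta |\zeta_H|^{2H}}<\infty \quad\text{for all } \delta<\alpha_H . \]
   Context: Let $H\in(0,1]$ and let $W^H=\{W^H_s,\ s\in\mathbb{R}\}$ be a two-sided fractional Brownian motion with Hurst parameter $H$: a centered Gaussian process with continuous trajectories, $W^H_0=0$, $E(W^H_s)=0$ and $E|W^H_s-W^H_t|^2=|s-t|^{2H}$ for all $s,t\in\mathbb{R}$ (so its covariance is $R(t,s)=\frac12(|t|^{2H}+|s|^{2H}-|t-s|^{2H})$). Define $Z_t=\exp\{W^H_t-\tfrac12|t|^{2H}\}$ for $t\in\mathbb{R}$, the random density $q_t=Z_t\left(\int_{-\infty}^{\infty}Z_u\,du\right)^{-1}$, and the Pitman-type random variable $\zeta_H=\int_{-\infty}^{\infty} t\,q_t\,dt$. *)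

theory Defs
  imports "HOL-Probability.Probability"
begin

definition fbm_cov :: "real \<Rightarrow> real \<Rightarrow> real \<Rightarrow> real" where
  "fbm_cov H t s = (\<bar>t\<bar> powr (2*H) + \<bar>s\<bar> powr (2*H) - \<bar>t - s\<bar> powr (2*H)) / 2"

definition centered_gaussian :: "'a measure \<Rightarrow> ('a \<Rightarrow> real) \<Rightarrow> real \<Rightarrow> bool" where
  "centered_gaussian M X v \<longleftrightarrow>
     X \<in> borel_measurable M \<and>
     ((v = 0 \<and> (AE \<omega> in M. X \<omega> = 0)) \<or>
      (v > 0 \<and> distributed M lborel X (\<lambda>x. ennreal (normal_density 0 (sqrt v) x))))"

definition is_fbm :: "'a measure \<Rightarrow> real \<Rightarrow> (real \<Rightarrow> 'a \<Rightarrow> real) \<Rightarrow> bool" where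
  "is_fbm M H W \<longleftrightarrow>
     prob_space M \<and>
     (\<forall>t. W t \<in> borel_measurable M) \<and>
     (\<forall>\<omega>\<in>space M. continuous_on UNIV (\<lambda>t. W t \<omega>)) \<and>
     (\<forall>\<omega>\<in>space M. W 0 \<omega> = 0) \<and>
     (\<forall>I c. finite I \<longrightarrow>
        centered_gaussian M (\<lambda>\<omega>. \<Sum>t\<in>I. c t * W t \<omega>)
          (\<Sum>s\<in>I. \<Sum>t\<in>I. c s * c t * fbm_cov H s t))"

definition fbm_Z :: "real \<Rightarrow> (real \<Rightarrow> 'a \<Rightarrow> real) \<Rightarrow> real \<Rightarrow> 'a \<Rightarrow> real" where
  "fbm_Z H W t \<omega> = exp (W t \<omega> - \<bar>t\<bar> powr (2*H) / 2)"

definition fbm_q :: "real \<Rightarrow> (real \<Rightarrow> 'a \<Rightarrow> real) \<Rightarrow> real \<Rightarrow> 'a \<Rightarrow> real" where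
  "fbm_q H W t \<omega> = fbm_Z H W t \<omega> / (\<integral>u. fbm_Z H W u \<omega> \<partial>lborel)"

definition pitman_zeta :: "real \<Rightarrow> (real \<Rightarrow> 'a \<Rightarrow> real) \<Rightarrow> 'a \<Rightarrow> real" where
  "pitman_zeta H W \<omega> = (\<integral>t. t * fbm_q H W t \<omega> \<partial>lborel)"

end

theory Submission
  imports Defs
begin

text \<open>Off an exceptional event \<open>B\<^sub>m\<close> the path satisfies \<open>\<bar>W\<^sub>t\<bar> \<le> m\<^sup>2\<^sup>H / 32\<close> on
  \<open>[0, 1]\<close> and \<open>W\<^sub>t \<le> (\<bar>t\<bar>\<^sup>2\<^sup>H + 1) / 4\<close> for \<open>\<bar>t\<bar> \<ge> m\<close>. Then \<open>Z\<^sub>t\<close> decays like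
  \<open>exp (-\<bar>t\<bar>\<^sup>2\<^sup>H / 4)\<close> beyond \<open>m\<close> while its mass on \<open>[0, 1]\<close> is at least
  \<open>exp (-m\<^sup>2\<^sup>H / 32 - 1/2)\<close>, which gives \<open>\<bar>\<zeta>\<^sub>H\<bar> \<le> m + C\<close> with \<open>C\<close> independent of \<open>m\<close>.
  By Gaussian tails of the increments and a dyadic chaining argument on unit blocks,
  \<open>P(B\<^sub>m) = O(exp (-\<beta> m\<^sup>2\<^sup>H))\<close>; summing over \<open>m\<close> bounds
  \<open>E exp (\<delta> \<bar>\<zeta>\<^sub>H\<bar>\<^sup>2\<^sup>H)\<close> for \<open>\<delta> < \<beta> / 4\<close>.\<close>

section \<open>Gaussian tails of increments\<close>

lemma normal_exp_square_moment:
  assumes "0 < v"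
    and X: "distributed M lborel X (\<lambda>x. ennreal (normal_density 0 (sqrt v) x))"
  shows "(\<integral>\<^sup>+\<omega>. ennreal (exp ((X \<omega>)\<^sup>2 / (4 * v))) \<partial>M) = ennreal (sqrt 2)"
proof -
  have density: "normal_density 0 (sqrt v) x * exp (x\<^sup>2 / (4 * v))
      = sqrt 2 * normal_density 0 (sqrt 2 * sqrt v) x" for x
  proof -
    have "exp (-(x - 0)\<^sup>2 / (2 * (sqrt v)\<^sup>2)) * exp (x\<^sup>2 / (4 * v))
        = exp (-(x - 0)\<^sup>2 / (2 * (sqrt 2 * sqrt v)\<^sup>2))"
      using \<open>0 < v\<close> by (simp add: exp_add[symmetric] power_mult_distrib field_simps)
    moreover have "1 / sqrt (2 * pi * (sqrt v)\<^sup>2) = sqrt 2 * (1 / sqrt (2 * pi * (sqrt 2 * sqrt v)\<^sup>2))"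
      using \<open>0 < v\<close> by (simp add: power_mult_distrib real_sqrt_mult field_simps)
    ultimately show ?thesis
      unfolding normal_density_def by (simp add: mult.assoc)
  qed
  have pos: "0 < sqrt 2 * sqrt v"
    using \<open>0 < v\<close> by simp
  have "(\<integral>\<^sup>+\<omega>. ennreal (exp ((X \<omega>)\<^sup>2 / (4 * v))) \<partial>M)
      = (\<integral>\<^sup>+x. ennreal (normal_density 0 (sqrt v) x) * ennreal (exp (x\<^sup>2 / (4 * v))) \<partial>lborel)"
    by (rule distributed_nn_integral[OF X, symmetric]) simp
  also have "\<dots> = (\<integral>\<^sup>+x. ennreal (sqrt 2) * ennreal (normal_density 0 (sqrt 2 * sqrt v) x) \<partial>lborel)"
    by (simp add: density ennreal_mult[symmetric])
  also have "\<dots> = ennreal (sqrt 2) * (\<integral>\<^sup>+x. ennreal (normal_density 0 (sqrt 2 * sqrt v) x) \<partial>lborel)"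
    by (simp add: nn_integral_cmult)
  also have "(\<integral>\<^sup>+x. ennreal (normal_density 0 (sqrt 2 * sqrt v) x) \<partial>lborel) = 1"
    by (subst nn_integral_eq_integral)
      (auto simp: integrable_normal_density[OF pos] integral_normal_density[OF pos])
  finally show ?thesis
    by simp
qed

lemma centered_gaussian_tail:
  assumes "prob_space M" and G: "centered_gaussian M X v" and "0 \<le> a"
  shows "measure M {\<omega>\<in>space M. a \<le> \<bar>X \<omega>\<bar>} \<le> 2 * exp (-(a\<^sup>2) / (4 * v))"
proof -
  interpret prob_space M by fact
  have Xm[measurable]: "X \<in> borel_measurable M"
    using G unfolding centered_gaussian_def by auto
  show ?thesis
  proof (cases "0 < v")
    case False
    then have "a\<^sup>2 / (4 * v) \<le> 0"
      by (simp add: divide_nonneg_nonpos)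
    then have "1 \<le> exp (-(a\<^sup>2) / (4 * v))"
      by simp
    then show ?thesis
      using prob_le_1[of "{\<omega>\<in>space M. a \<le> \<bar>X \<omega>\<bar>}"] by linarith
  next
    case True
    then have X: "distributed M lborel X (\<lambda>x. ennreal (normal_density 0 (sqrt v) x))"
      using G unfolding centered_gaussian_def by auto
    have markov: "indicator {\<omega>\<in>space M. a \<le> \<bar>X \<omega>\<bar>} \<omega>
        \<le> ennreal (exp (-(a\<^sup>2) / (4 * v))) * ennreal (exp ((X \<omega>)\<^sup>2 / (4 * v)))" for \<omega>
    proof (cases "\<omega> \<in> space M \<and> a \<le> \<bar>X \<omega>\<bar>")
      case True
      then have "a\<^sup>2 \<le> (X \<omega>)\<^sup>2"
        using \<open>0 \<le> a\<close> by (metis power2_abs power_mono)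
      then have "0 \<le> -(a\<^sup>2) / (4 * v) + (X \<omega>)\<^sup>2 / (4 * v)"
        using \<open>0 < v\<close> by (simp add: field_simps)
      then show ?thesis
        using True by (simp add: ennreal_mult[symmetric] exp_add[symmetric] indicator_def)
    qed (auto simp: indicator_def)
    have "emeasure M {\<omega>\<in>space M. a \<le> \<bar>X \<omega>\<bar>} = (\<integral>\<^sup>+\<omega>. indicator {\<omega>\<in>space M. a \<le> \<bar>X \<omega>\<bar>} \<omega> \<partial>M)"
      by simp
    also have "\<dots> \<le> (\<integral>\<^sup>+\<omega>. ennreal (exp (-(a\<^sup>2) / (4 * v))) * ennreal (exp ((X \<omega>)\<^sup>2 / (4 * v))) \<partial>M)"
      by (intro nn_integral_mono markov)
    also have "\<dots> = ennreal (exp (-(a\<^sup>2) / (4 * v))) * ennreal (sqrt 2)"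
      by (simp add: nn_integral_cmult normal_exp_square_moment[OF True X])
    also have "\<dots> \<le> ennreal (2 * exp (-(a\<^sup>2) / (4 * v)))"
      by (simp add: ennreal_mult[symmetric] ennreal_le_iff sqrt2_less_2 less_imp_le)
    finally show ?thesis
      by (simp add: emeasure_eq_measure)
  qed
qed

lemma is_fbmD:
  assumes "is_fbm M H W"
  shows "prob_space M" and "W t \<in> borel_measurable M"
    and "\<omega> \<in> space M \<Longrightarrow> continuous_on UNIV (\<lambda>t. W t \<omega>)"
    and "\<omega> \<in> space M \<Longrightarrow> W 0 \<omega> = 0"
    and "finite I \<Longrightarrow> centered_gaussian M (\<lambda>\<omega>. \<Sum>t\<in>I. c t * W t \<omega>)
           (\<Sum>s\<in>I. \<Sum>t\<in>I. c s * c t * fbm_cov H s t)"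
  using assms unfolding is_fbm_def by auto

lemma fbm_increment_centered_gaussian:
  assumes "is_fbm M H W" "s \<noteq> t"
  shows "centered_gaussian M (\<lambda>\<omega>. W t \<omega> - W s \<omega>) (\<bar>t - s\<bar> powr (2*H))"
proof -
  define c where "c u = (if u = t then 1 else -1 :: real)" for u
  have "(\<lambda>\<omega>. \<Sum>u\<in>{t,s}. c u * W u \<omega>) = (\<lambda>\<omega>. W t \<omega> - W s \<omega>)"
    using \<open>s \<noteq> t\<close> by (auto simp: c_def)
  moreover have "(\<Sum>a\<in>{t,s}. \<Sum>b\<in>{t,s}. c a * c b * fbm_cov H a b) = \<bar>t - s\<bar> powr (2*H)"
    using \<open>s \<noteq> t\<close> by (simp add: c_def fbm_cov_def abs_minus_commute field_simps)
  ultimately show ?thesis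
    using is_fbmD(5)[OF assms(1), of "{t,s}" c] by simp
qed

lemma fbm_increment_tail:
  assumes "is_fbm M H W" "0 \<le> a" "s \<noteq> t"
  shows "measure M {\<omega>\<in>space M. a \<le> \<bar>W t \<omega> - W s \<omega>\<bar>} \<le> 2 * exp (-(a\<^sup>2) / (4 * \<bar>t - s\<bar> powr (2*H)))"
  by (rule centered_gaussian_tail[OF is_fbmD(1)[OF assms(1)]
        fbm_increment_centered_gaussian[OF assms(1,3)] assms(2)])

section \<open>Dyadic chaining\<close>

lemma dyadic_value_le_sum:
  fixes f :: "real \<Rightarrow> real" and e :: "nat \<Rightarrow> real"
  assumes "f 0 = 0" and e: "\<And>n. 0 \<le> e n"
    and inc: "\<And>n j. j < 2^n \<Longrightarrow> \<bar>f (real (Suc j) / 2^n) - f (real j / 2^n)\<bar> \<le> e n"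
  shows "j \<le> 2^N \<Longrightarrow> \<bar>f (real j / 2^N)\<bar> \<le> (\<Sum>n\<le>N. e n)"
proof (induction N arbitrary: j)
  case 0
  then consider "j = 0" | "j = 1"
    by fastforce
  then show ?case
    using inc[of 0 0] \<open>f 0 = 0\<close> e[of 0] by cases simp_all
next
  case (Suc N)
  obtain i where "j = 2 * i \<or> j = 2 * i + 1"
    by (metis odd_two_times_div_two_succ dvd_mult_div_cancel)
  moreover have half: "real (2 * i) / 2 ^ Suc N = real i / 2^N"
    by simp
  ultimately consider "j = 2 * i" "i \<le> 2^N" | "j = 2 * i + 1" "i < 2^N"
    using Suc.prems by fastforce
  then show ?case
  proof cases
    case 1
    then show ?thesis
      using Suc.IH[of i] half e[of "Suc N"] by simp
  next
    case 2
    have "\<bar>f (real (Suc (2*i)) / 2^Suc N) - f (real (2*i) / 2^Suc N)\<bar> \<le> e (Suc N)"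
      using \<open>i < 2^N\<close> by (intro inc) simp
    then show ?thesis
      using 2 Suc.IH[of i] half by simp
  qed
qed

lemma dyadic_floor_le:
  fixes t :: real
  assumes "0 \<le> t" "t \<le> 1"
  shows "nat \<lfloor>t * 2^N\<rfloor> \<le> 2^N"
proof -
  have "t * 2^N \<le> 2^N"
    using assms by simp
  then have "\<lfloor>t * 2^N\<rfloor> \<le> 2^N"
    by (metis floor_mono floor_of_int of_int_numeral of_int_power)
  then show ?thesis
    by (simp add: nat_le_iff)
qed

lemma dyadic_floor_tendsto:
  fixes t :: real
  assumes "0 \<le> t"
  shows "(\<lambda>N. real (nat \<lfloor>t * 2^N\<rfloor>) / 2^N) \<longlonglongrightarrow> t"
proof -
  have le: "\<bar>real (nat \<lfloor>t * 2^N\<rfloor>) / 2^N - t\<bar> \<le> 1 / 2^N" for N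
  proof -
    have nat: "real (nat \<lfloor>t * 2^N\<rfloor>) = of_int \<lfloor>t * 2^N\<rfloor>"
      using assms by simp
    have "\<bar>of_int \<lfloor>t * 2^N\<rfloor> - t * 2^N\<bar> \<le> (1::real)"
      by linarith
    have "\<bar>of_int \<lfloor>t * 2^N\<rfloor> / 2^N - t\<bar> = \<bar>of_int \<lfloor>t * 2^N\<rfloor> - t * 2^N\<bar> / (2::real)^N"
      by (simp add: field_simps)
    also have "\<dots> \<le> 1 / 2^N"
      using \<open>\<bar>of_int \<lfloor>t * 2^N\<rfloor> - t * 2^N\<bar> \<le> 1\<close> by (simp add: divide_right_mono)
    finally show ?thesis
      unfolding nat .
  qed
  have "(\<lambda>N. 1 / (2::real)^N) \<longlonglongrightarrow> 0"
    by (simp add: LIMSEQ_divide_realpow_zero)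
  then have "(\<lambda>N. real (nat \<lfloor>t * 2^N\<rfloor>) / 2^N - t) \<longlonglongrightarrow> 0"
    by (rule Lim_null_comparison[rotated]) (use le in auto)
  then show ?thesis
    by (simp add: LIM_zero_iff)
qed

lemma abs_le_of_dyadic_increments:
  fixes f :: "real \<Rightarrow> real"
  assumes "f 0 = 0" "continuous_on UNIV f" "0 \<le> y"
    and e: "\<And>n. 0 \<le> e n" "\<And>N. (\<Sum>n\<le>N. e n) \<le> 1"
    and inc: "\<And>n j. j < 2^n \<Longrightarrow> \<bar>f (real (Suc j) / 2^n) - f (real j / 2^n)\<bar> \<le> y * e n"
    and t: "0 \<le> t" "t \<le> 1"
  shows "\<bar>f t\<bar> \<le> y"
proof -
  have dyadic: "\<bar>f (real j / 2^N)\<bar> \<le> y" if "j \<le> 2^N" for j N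
  proof -
    have "\<bar>f (real j / 2^N)\<bar> \<le> (\<Sum>n\<le>N. y * e n)"
      by (rule dyadic_value_le_sum[OF \<open>f 0 = 0\<close> _ inc that]) (simp add: \<open>0 \<le> y\<close> e(1))
    also have "\<dots> \<le> y"
      using e(2)[of N] \<open>0 \<le> y\<close> by (simp add: sum_distrib_left[symmetric] mult_left_le)
    finally show ?thesis .
  qed
  have "(\<lambda>N. \<bar>f (real (nat \<lfloor>t * 2^N\<rfloor>) / 2^N)\<bar>) \<longlonglongrightarrow> \<bar>f t\<bar>"
    by (intro tendsto_rabs continuous_on_tendsto_compose[OF _ dyadic_floor_tendsto])
      (use assms in auto)
  then show ?thesis
    by (rule LIMSEQ_le_const2) (use dyadic dyadic_floor_le[OF t] in auto)
qed

text \<open>The ratio \<open>2 powr (-h/4)\<close> makes the weights sum to at most 1 while the squared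
  level-\<open>n\<close> threshold over the increment variance still grows like \<open>(2 powr (h/2))\<^sup>n\<close>.\<close>
definition chain_weight :: "real \<Rightarrow> nat \<Rightarrow> real" where
  "chain_weight h n = (1 - 2 powr (-h/4)) * (2 powr (-h/4)) ^ n"

lemma chain_ratio_bounds: "0 < h \<Longrightarrow> 0 < 2 powr (-h/4) \<and> 2 powr (-h/4) < (1::real)"
  by (auto intro!: powr_less_one)

lemma chain_weight_nonneg: "0 < h \<Longrightarrow> 0 \<le> chain_weight h n"
  using chain_ratio_bounds[of h] unfolding chain_weight_def by auto

lemma sum_chain_weight_le_1: "0 < h \<Longrightarrow> (\<Sum>n\<le>N. chain_weight h n) \<le> 1"
proof -
  assume "0 < h"
  define r :: real where "r = 2 powr (-h/4)"
  have "(\<Sum>n\<le>N. chain_weight h n) = (1 - r) * (\<Sum>n\<le>N. r ^ n)"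
    unfolding chain_weight_def r_def by (simp add: sum_distrib_left)
  also have "\<dots> = 1 - r ^ Suc N"
    by (simp only: one_diff_power_eq lessThan_Suc_atMost)
  finally show ?thesis
    using chain_ratio_bounds[OF \<open>0 < h\<close>] unfolding r_def by simp
qed

lemma chain_weight_square_div:
  assumes "0 < h"
  shows "(y * chain_weight h n)\<^sup>2 / (4 * (1 / 2^n) powr h)
         = (1 - 2 powr (-h/4))\<^sup>2 / 4 * y\<^sup>2 * (2 powr (h/2)) ^ n"
proof -
  have ratio: "((2 powr (-h/4)) ^ n)\<^sup>2 = 2 powr (- (real n * h / 2))"
    by (simp add: powr_power power2_eq_square powr_add[symmetric] mult.commute)
  have var: "(1 / (2::real)^n) powr h = 2 powr (- (real n * h))"
    by (simp add: powr_minus_divide[symmetric] powr_realpow[symmetric] powr_powr)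
  have "((2 powr (-h/4)) ^ n)\<^sup>2 / (1 / 2^n) powr h = (2 powr (h/2)) ^ n"
    unfolding ratio var powr_diff[symmetric] by (simp add: powr_power algebra_simps)
  then show ?thesis
    unfolding chain_weight_def power_mult_distrib by (simp add: field_simps)
qed

definition chain_violated :: "(real \<Rightarrow> 'a \<Rightarrow> real) \<Rightarrow> real \<Rightarrow> real \<Rightarrow> real \<Rightarrow> 'a \<Rightarrow> bool" where
  "chain_violated W h b y \<omega> \<longleftrightarrow> (\<exists>n j. j < (2::nat)^n \<and>
      y * chain_weight h n < \<bar>W (b + real (Suc j) / 2^n) \<omega> - W (b + real j / 2^n) \<omega>\<bar>)"

lemma chain_violated_sets:
  assumes [measurable]: "\<And>t. W t \<in> borel_measurable M"
  shows "{\<omega>\<in>space M. chain_violated W h b y \<omega>} \<in> sets M"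
proof -
  have "{\<omega>\<in>space M. chain_violated W h b y \<omega>} = (\<Union>n. \<Union>j<(2::nat)^n.
      {\<omega>\<in>space M. y * chain_weight h n < \<bar>W (b + real (Suc j) / 2^n) \<omega> - W (b + real j / 2^n) \<omega>\<bar>})"
    unfolding chain_violated_def by auto
  also have "\<dots> \<in> sets M"
  proof -
    have "{\<omega>\<in>space M. c < \<bar>W t \<omega> - W s \<omega>\<bar>} \<in> sets M" for c t s
      by measurable
    then show ?thesis
      by (auto intro!: sets.countable_UN sets.finite_UN)
  qed
  finally show ?thesis .
qed

lemma abs_increment_le_of_not_chain_violated:
  assumes "is_fbm M H W" "\<omega> \<in> space M" "0 < h" "0 \<le> y" "\<not> chain_violated W h b y \<omega>"
    and "0 \<le> t" "t \<le> 1"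
  shows "\<bar>W (b + t) \<omega> - W b \<omega>\<bar> \<le> y"
proof -
  define f where "f s = W (b + s) \<omega> - W b \<omega>" for s
  have "continuous_on UNIV (\<lambda>s. W (b + s) \<omega>)"
    using continuous_on_compose2[OF is_fbmD(3)[OF assms(1,2)], of UNIV "\<lambda>s. b + s"]
      continuous_on_add[OF continuous_on_const continuous_on_id]
    by auto
  then have "continuous_on UNIV f"
    unfolding f_def by (intro continuous_on_diff continuous_on_const)
  have "\<bar>f t\<bar> \<le> y"
  proof (rule abs_le_of_dyadic_increments[of f y "chain_weight h"])
    fix n j :: nat
    assume "j < 2^n"
    then have "\<not> y * chain_weight h n < \<bar>W (b + real (Suc j) / 2^n) \<omega> - W (b + real j / 2^n) \<omega>\<bar>"
      using assms(5) unfolding chain_violated_def by blast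
    then show "\<bar>f (real (Suc j) / 2^n) - f (real j / 2^n)\<bar> \<le> y * chain_weight h n"
      unfolding f_def by linarith
  qed (use \<open>continuous_on UNIV f\<close> assms(3,4,6,7) chain_weight_nonneg sum_chain_weight_le_1
    in \<open>simp_all add: f_def\<close>)
  then show ?thesis
    by (simp add: f_def)
qed

lemma exp_neg_geometric_le:
  fixes a \<rho> :: real
  assumes "1 < \<rho>" "ln 4 / (\<rho> - 1) \<le> a"
  shows "2^n * (2 * exp (-(a * \<rho>^n))) \<le> 2 * exp (-a) * (1/2)^n"
proof -
  have "0 \<le> a"
    using assms by (smt (verit) divide_pos_pos ln_gt_zero)
  have "1 + real n * (\<rho> - 1) \<le> (1 + (\<rho> - 1))^n"
    by (rule Bernoulli_inequality) (use assms in auto)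
  then have "1 + real n * (\<rho> - 1) \<le> \<rho>^n"
    by simp
  have "ln 4 \<le> a * (\<rho> - 1)"
    using assms by (simp add: field_simps)
  then have "a + real n * ln 4 \<le> a + real n * (a * (\<rho> - 1))"
    by (simp add: mult_left_mono)
  also have "\<dots> = a * (1 + real n * (\<rho> - 1))"
    by (simp add: algebra_simps)
  also have "\<dots> \<le> a * \<rho>^n"
    using \<open>1 + real n * (\<rho> - 1) \<le> \<rho>^n\<close> \<open>0 \<le> a\<close> by (rule mult_left_mono)
  finally have "exp (-(a * \<rho>^n)) \<le> exp (-(a + real n * ln 4))"
    by simp
  also have "\<dots> = exp (-a) / 4^n"
  proof -
    have "exp (real n * ln 4) = 4 ^ n"
      by (subst exp_of_nat_mult) simp
    then show ?thesis
      by (simp add: exp_diff exp_add exp_minus field_simps)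
  qed
  finally have "2^n * (2 * exp (-(a * \<rho>^n))) \<le> 2^n * (2 * (exp (-a) / 4^n))"
    by (intro mult_left_mono) auto
  also have "\<dots> = 2 * exp (-a) * (2^n / 4^n)"
    by simp
  also have "(2::real)^n / 4^n = (1/2)^n"
    by (simp add: power_divide[symmetric])
  finally show ?thesis .
qed

lemma (in prob_space) measure_UN_le_suminf:
  assumes A: "range A \<subseteq> sets M" and le: "\<And>i. measure M (A i) \<le> u i" and u: "summable u"
  shows "measure M (\<Union>i. A i) \<le> (\<Sum>i. u i)"
proof -
  have summable: "summable (\<lambda>i. measure M (A i))"
    by (rule summable_comparison_test'[OF u]) (simp add: le)
  have "measure M (\<Union>i. A i) \<le> (\<Sum>i. measure M (A i))"
    by (rule finite_measure_subadditive_countably[OF A summable])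
  also have "\<dots> \<le> (\<Sum>i. u i)"
    by (rule suminf_le[OF le summable u])
  finally show ?thesis .
qed

lemma chain_increment_prob:
  assumes "is_fbm M H W" "0 < H" "0 \<le> y"
  shows "measure M {\<omega>\<in>space M. y * chain_weight (2*H) n
           < \<bar>W (b + real (Suc j) / 2^n) \<omega> - W (b + real j / 2^n) \<omega>\<bar>}
         \<le> 2 * exp (-((1 - 2 powr (-H/2))\<^sup>2 / 4 * y\<^sup>2 * (2 powr H) ^ n))"
proof -
  interpret prob_space M
    using is_fbmD(1)[OF assms(1)] .
  note [measurable] = is_fbmD(2)[OF assms(1)]
  let ?s = "b + real j / 2^n" and ?t = "b + real (Suc j) / 2^n"
  have "measure M {\<omega>\<in>space M. y * chain_weight (2*H) n < \<bar>W ?t \<omega> - W ?s \<omega>\<bar>}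
      \<le> measure M {\<omega>\<in>space M. y * chain_weight (2*H) n \<le> \<bar>W ?t \<omega> - W ?s \<omega>\<bar>}"
    by (intro finite_measure_mono) auto
  also have "\<dots> \<le> 2 * exp (-((y * chain_weight (2*H) n)\<^sup>2) / (4 * \<bar>?t - ?s\<bar> powr (2*H)))"
    using assms chain_weight_nonneg[of "2*H" n] by (intro fbm_increment_tail) auto
  also have "\<bar>?t - ?s\<bar> = 1 / 2^n"
    by (simp add: field_simps)
  also have "-((y * chain_weight (2*H) n)\<^sup>2) / (4 * (1 / 2^n) powr (2*H))
      = -((1 - 2 powr (-H/2))\<^sup>2 / 4 * y\<^sup>2 * (2 powr H) ^ n)"
    using chain_weight_square_div[of "2*H" y n] \<open>0 < H\<close> by simp
  finally show ?thesis .
qed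

text \<open>Once \<open>a \<ge> ln 4 / (\<rho> - 1)\<close>, level \<open>n\<close> contributes at most \<open>2 exp (-a) / 2^n\<close>;
  for smaller \<open>a\<close> the trivial bound 1 is absorbed into the constant.\<close>
lemma (in prob_space) measure_UN_doubly_exponential_le:
  assumes "range A \<subseteq> sets M" "1 < \<rho>"
    and level: "\<And>n. measure M (A n) \<le> 2^n * (2 * exp (-(a * \<rho>^n)))"
  shows "measure M (\<Union>n. A n) \<le> (4 + exp (ln 4 / (\<rho> - 1))) * exp (-a)"
proof (cases "ln 4 / (\<rho> - 1) \<le> a")
  case True
  have "measure M (A n) \<le> 2 * exp (-a) * (1/2)^n" for n
    using level[of n] exp_neg_geometric_le[OF \<open>1 < \<rho>\<close> True, of n] by linarith
  then have "measure M (\<Union>n. A n) \<le> (\<Sum>n. 2 * exp (-a) * (1/2)^n)"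
    by (intro measure_UN_le_suminf[OF assms(1)] summable_mult summable_geometric) simp_all
  also have "\<dots> = 4 * exp (-a)"
    by (simp add: suminf_mult suminf_geometric)
  also have "\<dots> \<le> (4 + exp (ln 4 / (\<rho> - 1))) * exp (-a)"
    by (simp add: distrib_right)
  finally show ?thesis .
next
  case False
  have "measure M (\<Union>n. A n) \<le> 1"
    by (rule prob_le_1)
  also have "1 \<le> exp (ln 4 / (\<rho> - 1) - a)"
    using False by simp
  also have "\<dots> \<le> (4 + exp (ln 4 / (\<rho> - 1))) * exp (-a)"
    by (simp add: exp_diff exp_minus divide_inverse)
  finally show ?thesis .
qed

text \<open>The level-\<open>n\<close> union has \<open>2^n\<close> events whose probabilities decay doubly
  exponentially in \<open>n\<close>, so the bound over all levels is of Gaussian order in \<open>y\<close>.\<close>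
lemma chain_violated_prob:
  assumes "is_fbm M H W" "0 < H"
  obtains K c where "0 \<le> K" "0 < c"
    "\<And>b y. 0 \<le> y \<Longrightarrow> measure M {\<omega>\<in>space M. chain_violated W (2*H) b y \<omega>} \<le> K * exp (-(c * y\<^sup>2))"
proof -
  interpret prob_space M
    using is_fbmD(1)[OF assms(1)] .
  note [measurable] = is_fbmD(2)[OF assms(1)]
  define c where "c = (1 - 2 powr (-H/2))\<^sup>2 / 4"
  define \<rho> :: real where "\<rho> = 2 powr H"
  have "0 < c"
    using chain_ratio_bounds[of "2*H"] \<open>0 < H\<close> unfolding c_def by simp
  have "1 < \<rho>"
    unfolding \<rho>_def using \<open>0 < H\<close> by simp
  have "measure M {\<omega>\<in>space M. chain_violated W (2*H) b y \<omega>}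
      \<le> (4 + exp (ln 4 / (\<rho> - 1))) * exp (-(c * y\<^sup>2))" if "0 \<le> y" for b y
  proof -
    define B where "B n j = {\<omega>\<in>space M. y * chain_weight (2*H) n
        < \<bar>W (b + real (Suc j) / 2^n) \<omega> - W (b + real j / 2^n) \<omega>\<bar>}" for n j :: nat
    define A where "A n = (\<Union>j<(2::nat)^n. B n j)" for n
    have B_sets: "B n j \<in> sets M" for n j
      unfolding B_def by measurable
    have "measure M (A n) \<le> 2^n * (2 * exp (-(c * y\<^sup>2 * \<rho>^n)))" for n
    proof -
      have "measure M (A n) \<le> (\<Sum>j<(2::nat)^n. measure M (B n j))"
        unfolding A_def by (rule measure_UNION_le) (auto intro: B_sets)
      also have "\<dots> \<le> (\<Sum>j<(2::nat)^n. 2 * exp (-(c * y\<^sup>2 * \<rho>^n)))"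
        using chain_increment_prob[OF assms \<open>0 \<le> y\<close>]
        unfolding B_def c_def \<rho>_def by (intro sum_mono) (simp add: mult.assoc mult.left_commute)
      finally show ?thesis
        by simp
    qed
    moreover have "{\<omega>\<in>space M. chain_violated W (2*H) b y \<omega>} = (\<Union>n. A n)"
      unfolding A_def B_def chain_violated_def by auto
    moreover have "range A \<subseteq> sets M"
      unfolding A_def using B_sets by blast
    ultimately show ?thesis
      using \<open>1 < \<rho>\<close> \<open>0 < c\<close> by (simp add: measure_UN_doubly_exponential_le)
  qed
  moreover have "0 \<le> 4 + exp (ln 4 / (\<rho> - 1))"
    by (simp add: add_nonneg_nonneg)
  ultimately show ?thesis
    using that \<open>0 < c\<close> by blast
qed

section \<open>Series with stretched-exponential decay\<close>

lemma powr_add_le_four: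
  fixes x y h :: real
  assumes "0 \<le> x" "0 \<le> y" "0 < h" "h \<le> 2"
  shows "(x + y) powr h \<le> 4 * (x powr h + y powr h)"
proof -
  have "(2::real) powr h \<le> 2 powr 2"
    using assms by (intro powr_mono) auto
  then have two: "(2::real) powr h \<le> 4"
    by simp
  have "(x + y) powr h \<le> (2 * max x y) powr h"
    using assms by (intro powr_mono2) auto
  also have "\<dots> = 2 powr h * max x y powr h"
    using assms by (simp add: powr_mult)
  also have "\<dots> \<le> 4 * max x y powr h"
    using two by (intro mult_right_mono) auto
  also have "max x y powr h \<le> x powr h + y powr h"
    by (cases "x \<le> y") (auto simp: max_def)
  finally show ?thesis
    by simp
qed

lemma exp_ge_power_div:
  fixes x :: real
  assumes "0 \<le> x" "0 < N"
  shows "(x / N) ^ N \<le> exp x"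
proof -
  have "x / N \<le> exp (x / N)"
    using exp_ge_add_one_self[of "x / N"] by linarith
  then have "(x / N) ^ N \<le> exp (x / N) ^ N"
    using assms by (intro power_mono) auto
  also have "\<dots> = exp x"
    using assms by (simp add: exp_of_nat_mult[symmetric])
  finally show ?thesis .
qed

text \<open>Comparison with \<open>1 / i\<^sup>2\<close>: \<open>exp (\<gamma> * i powr h)\<close> dominates \<open>i ^ (p + 2)\<close>
  through one term \<open>(\<gamma> * i powr h / N) ^ N\<close> of its power series, where \<open>N * h \<ge> p + 2\<close>.\<close>
lemma summable_poly_exp_neg_powr:
  fixes \<gamma> h :: real and p :: nat
  assumes "0 < \<gamma>" "0 < h"
  shows "summable (\<lambda>i::nat. (real i + 1) ^ p * exp (-(\<gamma> * real i powr h)))"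
proof -
  define N :: nat where "N = nat \<lceil>(real p + 2) / h\<rceil> + 1"
  have "0 < N"
    unfolding N_def by simp
  have Nh: "real p + 2 \<le> real N * h"
  proof -
    have "(real p + 2) / h \<le> real N"
      unfolding N_def by linarith
    then show ?thesis
      using \<open>0 < h\<close> by (simp add: field_simps)
  qed
  define D where "D = (\<gamma> / N) ^ N"
  have "0 < D"
    unfolding D_def using assms \<open>0 < N\<close> by simp
  show ?thesis
  proof (rule summable_comparison_test'[where N=1])
    show "summable (\<lambda>i::nat. 2 ^ p / D * inverse (real i ^ 2))"
      by (intro summable_mult inverse_power_summable) simp
    fix i :: nat
    assume "1 \<le> i"
    then have i: "1 \<le> real i"
      by simp
    have "D * real i ^ (p + 2) = D * real i powr real (p + 2)"
      using i by (subst powr_realpow) auto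
    also have "\<dots> \<le> D * real i powr (real N * h)"
      using i Nh \<open>0 < D\<close> by (intro mult_left_mono powr_mono) auto
    also have "\<dots> = (\<gamma> * real i powr h / N) ^ N"
      using i unfolding D_def by (simp add: powr_powr[symmetric] powr_realpow power_mult_distrib
          mult.commute[of "real N"] field_simps)
    also have "\<dots> \<le> exp (\<gamma> * real i powr h)"
      using assms \<open>0 < N\<close> by (intro exp_ge_power_div) auto
    finally have low: "D * real i ^ (p + 2) \<le> exp (\<gamma> * real i powr h)" .
    have "norm ((real i + 1) ^ p * exp (-(\<gamma> * real i powr h))) = (real i + 1) ^ p / exp (\<gamma> * real i powr h)"
      by (simp add: exp_minus field_simps)
    also have "\<dots> \<le> (2 * real i) ^ p / exp (\<gamma> * real i powr h)"
      using i by (intro divide_right_mono power_mono) auto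
    also have "\<dots> \<le> (2 * real i) ^ p / (D * real i ^ (p + 2))"
      using low i \<open>0 < D\<close> by (intro divide_left_mono) auto
    also have "\<dots> = 2 ^ p / D * inverse (real i ^ 2)"
      using i \<open>0 < D\<close> by (simp add: power_mult_distrib power_add field_simps power2_eq_square)
    finally show "norm ((real i + 1) ^ p * exp (-(\<gamma> * real i powr h))) \<le> 2 ^ p / D * inverse (real i ^ 2)" .
  qed
qed

section \<open>The exceptional event\<close>

definition block_violated :: "(real \<Rightarrow> 'a \<Rightarrow> real) \<Rightarrow> real \<Rightarrow> real \<Rightarrow> 'a \<Rightarrow> bool" where
  "block_violated W h b \<omega> \<longleftrightarrow>
     \<bar>b\<bar> powr h / 32 < \<bar>W b \<omega>\<bar> \<or> chain_violated W h b (\<bar>b\<bar> powr h / 32) \<omega>"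

text \<open>Outside this event the path is bounded by \<open>m powr h / 32\<close> on \<open>[0, 1]\<close> and, on every
  unit block \<open>[b, b + 1]\<close> at distance at least \<open>m\<close> from the origin, by \<open>\<bar>b\<bar> powr h / 16\<close>.\<close>
definition fbm_bad_event :: "'a measure \<Rightarrow> (real \<Rightarrow> 'a \<Rightarrow> real) \<Rightarrow> real \<Rightarrow> nat \<Rightarrow> 'a set" where
  "fbm_bad_event M W h m = {\<omega>\<in>space M. chain_violated W h 0 (real m powr h / 32) \<omega> \<or>
     (\<exists>k. block_violated W h (real (m + k)) \<omega> \<or> block_violated W h (-(real (m + k) + 1)) \<omega>)}"

lemma block_violated_sets:
  assumes [measurable]: "\<And>t. W t \<in> borel_measurable M"
  shows "{\<omega>\<in>space M. block_violated W h b \<omega>} \<in> sets M"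
proof -
  have "{\<omega>\<in>space M. block_violated W h b \<omega>} = {\<omega>\<in>space M. \<bar>b\<bar> powr h / 32 < \<bar>W b \<omega>\<bar>}
      \<union> {\<omega>\<in>space M. chain_violated W h b (\<bar>b\<bar> powr h / 32) \<omega>}"
    unfolding block_violated_def by auto
  also have "\<dots> \<in> sets M"
  proof (rule sets.Un)
    show "{\<omega>\<in>space M. \<bar>b\<bar> powr h / 32 < \<bar>W b \<omega>\<bar>} \<in> sets M"
      by measurable
  qed (rule chain_violated_sets[OF assms])
  finally show ?thesis .
qed

lemma fbm_bad_event_sets:
  assumes "\<And>t. W t \<in> borel_measurable M"
  shows "fbm_bad_event M W h m \<in> sets M"
proof -
  have "fbm_bad_event M W h m = {\<omega>\<in>space M. chain_violated W h 0 (real m powr h / 32) \<omega>}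
      \<union> (\<Union>k. {\<omega>\<in>space M. block_violated W h (real (m + k)) \<omega>}
              \<union> {\<omega>\<in>space M. block_violated W h (-(real (m + k) + 1)) \<omega>})"
    unfolding fbm_bad_event_def by auto
  also have "\<dots> \<in> sets M"
  proof (rule sets.Un)
    show "{\<omega>\<in>space M. chain_violated W h 0 (real m powr h / 32) \<omega>} \<in> sets M"
      by (rule chain_violated_sets[OF assms])
    show "(\<Union>k. {\<omega>\<in>space M. block_violated W h (real (m + k)) \<omega>}
        \<union> {\<omega>\<in>space M. block_violated W h (-(real (m + k) + 1)) \<omega>}) \<in> sets M"
      using block_violated_sets[where W = W, OF assms] by (intro sets.countable_UN) blast
  qed
  finally show ?thesis .
qed

lemma fbm_value_tail:
  assumes "is_fbm M H W" "0 < H" "1 \<le> \<bar>b\<bar>"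
  shows "measure M {\<omega>\<in>space M. \<bar>b\<bar> powr (2*H) / 32 < \<bar>W b \<omega>\<bar>} \<le> 2 * exp (-(\<bar>b\<bar> powr (2*H) / 4096))"
proof -
  interpret prob_space M
    using is_fbmD(1)[OF assms(1)] .
  note [measurable] = is_fbmD(2)[OF assms(1)]
  define v where "v = \<bar>b\<bar> powr (2*H)"
  have "1 \<le> v"
    unfolding v_def using assms by (intro ge_one_powr_ge_zero) auto
  have "{\<omega>\<in>space M. v / 32 < \<bar>W b \<omega>\<bar>} \<subseteq> {\<omega>\<in>space M. v / 32 \<le> \<bar>W b \<omega> - W 0 \<omega>\<bar>}"
    using is_fbmD(4)[OF assms(1)] by auto
  then have "measure M {\<omega>\<in>space M. v / 32 < \<bar>W b \<omega>\<bar>}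
      \<le> measure M {\<omega>\<in>space M. v / 32 \<le> \<bar>W b \<omega> - W 0 \<omega>\<bar>}"
    by (rule finite_measure_mono) measurable
  also have "\<dots> \<le> 2 * exp (-((v/32)\<^sup>2) / (4 * v))"
    using fbm_increment_tail[OF assms(1), of "v / 32" 0 b] assms \<open>1 \<le> v\<close> unfolding v_def by auto
  also have "-((v/32)\<^sup>2) / (4 * v) = -(v / 4096)"
    using \<open>1 \<le> v\<close> by (simp add: power2_eq_square field_simps)
  finally show ?thesis
    unfolding v_def .
qed

lemma chain_violated_prob_linear:
  assumes KC: "\<And>b y. 0 \<le> y \<Longrightarrow> measure M {\<omega>\<in>space M. chain_violated W h b y \<omega>} \<le> K * exp (-(c * y\<^sup>2))"
    and "0 \<le> K" "0 < c" "1 \<le> v"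
  shows "measure M {\<omega>\<in>space M. chain_violated W h b (v / 32) \<omega>} \<le> K * exp (-(c / 1024 * v))"
proof -
  have "c / 1024 * v \<le> c / 1024 * v\<^sup>2"
    using \<open>0 < c\<close> \<open>1 \<le> v\<close> by (intro mult_left_mono) (auto simp: power2_eq_square)
  then have "exp (-(c * (v / 32)\<^sup>2)) \<le> exp (-(c / 1024 * v))"
    by (simp add: power_divide)
  then have "K * exp (-(c * (v / 32)\<^sup>2)) \<le> K * exp (-(c / 1024 * v))"
    using \<open>0 \<le> K\<close> by (rule mult_left_mono)
  then show ?thesis
    using KC[of "v / 32" b] \<open>1 \<le> v\<close> by simp
qed

lemma block_violated_prob:
  assumes "is_fbm M H W" "0 < H"
    and KC: "\<And>b y. 0 \<le> y \<Longrightarrow> measure M {\<omega>\<in>space M. chain_violated W (2*H) b y \<omega>} \<le> K * exp (-(c * y\<^sup>2))"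
    and "0 \<le> K" "0 < c" "1 \<le> \<bar>b\<bar>"
  shows "measure M {\<omega>\<in>space M. block_violated W (2*H) b \<omega>}
    \<le> (2 + K) * exp (-(min (1/4096) (c/1024) * \<bar>b\<bar> powr (2*H)))"
proof -
  interpret prob_space M
    using is_fbmD(1)[OF assms(1)] .
  note [measurable] = is_fbmD(2)[OF assms(1)]
  define v where "v = \<bar>b\<bar> powr (2*H)"
  define c' where "c' = min (1/4096) (c/1024)"
  have "1 \<le> v"
    unfolding v_def using assms by (intro ge_one_powr_ge_zero) auto
  have "measure M {\<omega>\<in>space M. block_violated W (2*H) b \<omega>}
      \<le> measure M {\<omega>\<in>space M. v / 32 < \<bar>W b \<omega>\<bar>}
        + measure M {\<omega>\<in>space M. chain_violated W (2*H) b (v / 32) \<omega>}"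
  proof -
    have "{\<omega>\<in>space M. block_violated W (2*H) b \<omega>} = {\<omega>\<in>space M. v / 32 < \<bar>W b \<omega>\<bar>}
        \<union> {\<omega>\<in>space M. chain_violated W (2*H) b (v / 32) \<omega>}"
      unfolding block_violated_def v_def by auto
    then show ?thesis
      using chain_violated_sets[OF is_fbmD(2)[OF assms(1)]]
      by (simp add: measure_Un_le)
  qed
  also have "\<dots> \<le> 2 * exp (-(v / 4096)) + K * exp (-(c / 1024 * v))"
    using fbm_value_tail[OF assms(1,2,6)] chain_violated_prob_linear[OF KC \<open>0 \<le> K\<close> \<open>0 < c\<close> \<open>1 \<le> v\<close>]
    unfolding v_def by (rule add_mono)
  also have "\<dots> \<le> 2 * exp (-(c' * v)) + K * exp (-(c' * v))"
  proof -
    have "c' * v \<le> 1/4096 * v" "c' * v \<le> c / 1024 * v"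
      using \<open>1 \<le> v\<close> unfolding c'_def by (simp_all add: mult_right_mono)
    then show ?thesis
      using \<open>0 \<le> K\<close> by (intro add_mono mult_left_mono) simp_all
  qed
  finally show ?thesis
    unfolding c'_def v_def by (simp add: algebra_simps)
qed

lemma block_pair_prob:
  assumes "is_fbm M H W" "0 < H"
    and KC: "\<And>b y. 0 \<le> y \<Longrightarrow> measure M {\<omega>\<in>space M. chain_violated W (2*H) b y \<omega>} \<le> K * exp (-(c * y\<^sup>2))"
    and "0 \<le> K" "0 < c" "1 \<le> x"
  shows "measure M ({\<omega>\<in>space M. block_violated W (2*H) x \<omega>}
      \<union> {\<omega>\<in>space M. block_violated W (2*H) (-(x + 1)) \<omega>})
    \<le> 2 * (2 + K) * exp (-(min (1/4096) (c/1024) * x powr (2*H)))"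
proof -
  interpret prob_space M
    using is_fbmD(1)[OF assms(1)] .
  define \<gamma> where "\<gamma> = min (1/4096) (c/1024)"
  have "0 < \<gamma>"
    unfolding \<gamma>_def using \<open>0 < c\<close> by simp
  have block: "measure M {\<omega>\<in>space M. block_violated W (2*H) b \<omega>} \<le> (2 + K) * exp (-(\<gamma> * \<bar>b\<bar> powr (2*H)))"
    if "1 \<le> \<bar>b\<bar>" for b
    unfolding \<gamma>_def by (rule block_violated_prob[OF assms(1,2) KC \<open>0 \<le> K\<close> \<open>0 < c\<close> that])
  have "x powr (2*H) \<le> \<bar>-(x + 1)\<bar> powr (2*H)"
    using \<open>1 \<le> x\<close> \<open>0 < H\<close> by (intro powr_mono2) auto
  then have far: "exp (-(\<gamma> * \<bar>-(x + 1)\<bar> powr (2*H))) \<le> exp (-(\<gamma> * x powr (2*H)))"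
    using \<open>0 < \<gamma>\<close> by simp
  have "measure M ({\<omega>\<in>space M. block_violated W (2*H) x \<omega>}
      \<union> {\<omega>\<in>space M. block_violated W (2*H) (-(x + 1)) \<omega>})
    \<le> measure M {\<omega>\<in>space M. block_violated W (2*H) x \<omega>}
      + measure M {\<omega>\<in>space M. block_violated W (2*H) (-(x + 1)) \<omega>}"
    by (intro measure_Un_le block_violated_sets[where W = W, OF is_fbmD(2)[OF assms(1)]])
  also have "\<dots> \<le> (2 + K) * exp (-(\<gamma> * x powr (2*H))) + (2 + K) * exp (-(\<gamma> * \<bar>-(x + 1)\<bar> powr (2*H)))"
    using \<open>1 \<le> x\<close> block[of x] block[of "-(x + 1)"] by (simp add: add_mono)
  also have "\<dots> \<le> (2 + K) * exp (-(\<gamma> * x powr (2*H))) + (2 + K) * exp (-(\<gamma> * x powr (2*H)))"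
    using \<open>0 \<le> K\<close> by (intro add_left_mono mult_left_mono far) simp
  also have "\<dots> = 2 * (2 + K) * exp (-(\<gamma> * x powr (2*H)))"
    by simp
  finally show ?thesis
    unfolding \<gamma>_def .
qed

lemma exp_neg_powr_add_le:
  fixes x y \<gamma> h :: real
  assumes "0 \<le> x" "0 \<le> y" "0 \<le> \<gamma>" "0 < h"
  shows "exp (-(\<gamma> * (x + y) powr h)) \<le> exp (-(\<gamma> / 2 * x powr h)) * exp (-(\<gamma> / 2 * y powr h))"
proof -
  have "x powr h + y powr h \<le> 2 * (x + y) powr h"
    using assms powr_mono2[of h x "x + y"] powr_mono2[of h y "x + y"] by simp
  then have "\<gamma> / 2 * (x powr h + y powr h) \<le> \<gamma> / 2 * (2 * (x + y) powr h)"
    using assms by (intro mult_left_mono) auto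
  then show ?thesis
    by (simp add: exp_add[symmetric] distrib_left)
qed

lemma fbm_bad_event_prob_le:
  assumes "is_fbm M H W" "0 < H" "H \<le> 1"
    and KC: "\<And>b y. 0 \<le> y \<Longrightarrow> measure M {\<omega>\<in>space M. chain_violated W (2*H) b y \<omega>} \<le> K * exp (-(c * y\<^sup>2))"
    and "0 \<le> K" "0 < c" "1 \<le> m"
  shows "measure M (fbm_bad_event M W (2*H) m)
    \<le> (K + 2 * (2 + K) * (\<Sum>k. exp (-(min (1/4096) (c/1024) / 2 * real k powr (2*H)))))
      * exp (-(min (1/4096) (c/1024) / 2 * real m powr (2*H)))"
proof -
  interpret prob_space M
    using is_fbmD(1)[OF assms(1)] .
  have W_meas: "\<And>t. W t \<in> borel_measurable M"
    using is_fbmD(2)[OF assms(1)] .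
  define h where "h = 2 * H"
  have h: "0 < h" "h \<le> 2"
    using assms(2,3) unfolding h_def by auto
  define \<gamma> where "\<gamma> = min (1/4096) (c/1024)"
  have "0 < \<gamma>"
    unfolding \<gamma>_def using \<open>0 < c\<close> by simp
  define u where "u k = exp (-(\<gamma> / 2 * real k powr h))" for k :: nat
  have u_summable: "summable u"
    using summable_poly_exp_neg_powr[of "\<gamma> / 2" h 0] \<open>0 < \<gamma>\<close> h unfolding u_def by simp
  define e where "e = exp (-(\<gamma> / 2 * real m powr h))"
  have "1 \<le> real m powr h"
    using \<open>1 \<le> m\<close> h by (intro ge_one_powr_ge_zero) auto
  define B0 where "B0 = {\<omega>\<in>space M. chain_violated W h 0 (real m powr h / 32) \<omega>}"
  define D where "D k = {\<omega>\<in>space M. block_violated W h (real (m + k)) \<omega>}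
    \<union> {\<omega>\<in>space M. block_violated W h (-(real (m + k) + 1)) \<omega>}" for k
  have B0_sets: "B0 \<in> sets M"
    unfolding B0_def by (rule chain_violated_sets[OF W_meas])
  have D_sets: "range D \<subseteq> sets M"
    unfolding D_def using block_violated_sets[where W = W, OF W_meas] by blast
  have "measure M B0 \<le> K * exp (-(c / 1024 * real m powr h))"
    unfolding B0_def h_def
    using chain_violated_prob_linear[OF KC \<open>0 \<le> K\<close> \<open>0 < c\<close> \<open>1 \<le> real m powr h\<close>[unfolded h_def]] .
  also have "\<dots> \<le> K * e"
  proof -
    have "\<gamma> / 2 * real m powr h \<le> c / 1024 * real m powr h"
      unfolding \<gamma>_def using \<open>0 < c\<close> by (intro mult_right_mono) auto
    then show ?thesis
      unfolding e_def using \<open>0 \<le> K\<close> by (intro mult_left_mono) auto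
  qed
  finally have B0_prob: "measure M B0 \<le> K * e" .
  have D_prob: "measure M (D k) \<le> 2 * (2 + K) * e * u k" for k
  proof -
    have "measure M (D k) \<le> 2 * (2 + K) * exp (-(\<gamma> * (real m + real k) powr h))"
      using block_pair_prob[OF assms(1,2) KC \<open>0 \<le> K\<close> \<open>0 < c\<close>, of "real (m + k)"] \<open>1 \<le> m\<close>
      unfolding D_def h_def \<gamma>_def by simp
    also have "exp (-(\<gamma> * (real m + real k) powr h)) \<le> e * u k"
      unfolding e_def u_def using \<open>0 < \<gamma>\<close> h by (intro exp_neg_powr_add_le) auto
    finally show ?thesis
      using \<open>0 \<le> K\<close> by (simp add: mult_left_mono mult.assoc)
  qed
  have "fbm_bad_event M W h m = B0 \<union> (\<Union>k. D k)"
    unfolding fbm_bad_event_def B0_def D_def by auto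
  then have "measure M (fbm_bad_event M W h m) \<le> measure M B0 + measure M (\<Union>k. D k)"
    using B0_sets D_sets by (simp add: measure_Un_le sets.countable_UN)
  also have "measure M (\<Union>k. D k) \<le> (\<Sum>k. 2 * (2 + K) * e * u k)"
    by (rule measure_UN_le_suminf[OF D_sets D_prob summable_mult[OF u_summable]])
  also have "\<dots> = 2 * (2 + K) * e * (\<Sum>k. u k)"
    by (rule suminf_mult[OF u_summable])
  finally show ?thesis
    using B0_prob unfolding e_def u_def h_def \<gamma>_def by (simp add: algebra_simps)
qed

lemma fbm_bad_event_prob:
  assumes "is_fbm M H W" "0 < H" "H \<le> 1"
  obtains A \<beta> where "0 < \<beta>"
    "\<And>m. 1 \<le> m \<Longrightarrow> measure M (fbm_bad_event M W (2*H) m) \<le> A * exp (-(\<beta> * real m powr (2*H)))"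
proof -
  obtain K c where "0 \<le> K" "0 < c" and
    KC: "\<And>b y. 0 \<le> y \<Longrightarrow> measure M {\<omega>\<in>space M. chain_violated W (2*H) b y \<omega>} \<le> K * exp (-(c * y\<^sup>2))"
    using chain_violated_prob[OF assms(1,2)] by blast
  moreover have "0 < min (1/4096) (c/1024) / 2"
    using \<open>0 < c\<close> by simp
  ultimately show ?thesis
    using that fbm_bad_event_prob_le[OF assms KC] by blast
qed

lemma abs_le_of_not_block_violated:
  assumes "is_fbm M H W" "0 < H" "\<omega> \<in> space M" "\<not> block_violated W (2*H) b \<omega>"
    and "0 \<le> t - b" "t - b \<le> 1"
  shows "\<bar>W t \<omega>\<bar> \<le> \<bar>b\<bar> powr (2*H) / 16"
proof -
  have "\<bar>W (b + (t - b)) \<omega> - W b \<omega>\<bar> \<le> \<bar>b\<bar> powr (2*H) / 32"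
    using assms unfolding block_violated_def
    by (intro abs_increment_le_of_not_chain_violated[where h = "2*H"]) auto
  then have "\<bar>W t \<omega> - W b \<omega>\<bar> \<le> \<bar>b\<bar> powr (2*H) / 32"
    by simp
  moreover have "\<bar>W b \<omega>\<bar> \<le> \<bar>b\<bar> powr (2*H) / 32"
    using assms(4) unfolding block_violated_def by simp
  ultimately show ?thesis
    by linarith
qed

lemma fbm_bounds_off_bad_event:
  assumes "is_fbm M H W" "0 < H" "H \<le> 1" "\<omega> \<in> space M" "\<omega> \<notin> fbm_bad_event M W (2*H) m"
  shows "\<And>t. 0 \<le> t \<Longrightarrow> t \<le> 1 \<Longrightarrow> \<bar>W t \<omega>\<bar> \<le> real m powr (2*H) / 32"
    and "\<And>t. real m \<le> \<bar>t\<bar> \<Longrightarrow> W t \<omega> \<le> (\<bar>t\<bar> powr (2*H) + 1) / 4"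
proof -
  have chain: "\<not> chain_violated W (2*H) 0 (real m powr (2*H) / 32) \<omega>"
    and blocks: "\<And>k. \<not> block_violated W (2*H) (real (m + k)) \<omega>"
      "\<And>k. \<not> block_violated W (2*H) (-(real (m + k) + 1)) \<omega>"
    using assms(4,5) unfolding fbm_bad_event_def by auto
  show "\<bar>W t \<omega>\<bar> \<le> real m powr (2*H) / 32" if "0 \<le> t" "t \<le> 1" for t
    using abs_increment_le_of_not_chain_violated[OF assms(1,4) _ _ chain that] assms(2)
      is_fbmD(4)[OF assms(1,4)] by simp
  show "W t \<omega> \<le> (\<bar>t\<bar> powr (2*H) + 1) / 4" if "real m \<le> \<bar>t\<bar>" for t
  proof -
    define k where "k = nat \<lfloor>\<bar>t\<bar>\<rfloor> - m"
    have i: "real (m + k) \<le> \<bar>t\<bar>" "\<bar>t\<bar> < real (m + k) + 1"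
      using that unfolding k_def by linarith+
    obtain b where b: "\<not> block_violated W (2*H) b \<omega>" "0 \<le> t - b" "t - b \<le> 1" "\<bar>b\<bar> \<le> \<bar>t\<bar> + 1"
    proof (cases "0 \<le> t")
      case True
      then show ?thesis
        using that[OF blocks(1)[of k]] i by auto
    next
      case False
      then show ?thesis
        using that[OF blocks(2)[of k]] i by auto
    qed
    have "\<bar>W t \<omega>\<bar> \<le> \<bar>b\<bar> powr (2*H) / 16"
      using abs_le_of_not_block_violated[OF assms(1,2,4) b(1-3)] .
    also have "\<bar>b\<bar> powr (2*H) \<le> (\<bar>t\<bar> + 1) powr (2*H)"
      using b(4) assms(2) by (intro powr_mono2) auto
    also have "\<dots> \<le> 4 * (\<bar>t\<bar> powr (2*H) + 1 powr (2*H))"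
      using assms(2,3) by (intro powr_add_le_four) auto
    finally show ?thesis
      by simp
  qed
qed

section \<open>The Pitman mean off the exceptional event\<close>

lemma ennreal_le_suminf: "(f i :: ennreal) \<le> (\<Sum>n. f n)"
  using sum_le_suminf[OF summableI, of "{i}" f] by simp

lemma nn_integral_le_suminf_unit_blocks:
  fixes f :: "real \<Rightarrow> ennreal" and \<kappa> :: "nat \<Rightarrow> ennreal"
  assumes f: "\<And>t. f t \<le> \<kappa> (nat \<lfloor>\<bar>t\<bar>\<rfloor>)"
  shows "(\<integral>\<^sup>+t. f t \<partial>lborel) \<le> (\<Sum>i. 2 * \<kappa> i)"
proof -
  define blk :: "nat \<Rightarrow> real \<Rightarrow> ennreal" where
    "blk i t = indicator {real i .. real i + 1} t + indicator {-(real i + 1) .. - real i} t" for i t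
  have "f t \<le> (\<Sum>i. \<kappa> i * blk i t)" for t
  proof -
    define i where "i = nat \<lfloor>\<bar>t\<bar>\<rfloor>"
    have "real i \<le> \<bar>t\<bar>" "\<bar>t\<bar> < real i + 1"
      unfolding i_def by linarith+
    then have "1 \<le> blk i t"
      unfolding blk_def by (cases "0 \<le> t") (auto simp: indicator_def)
    then have "f t \<le> \<kappa> i * blk i t"
      using f[of t] unfolding i_def[symmetric] by (metis mult.right_neutral mult_left_mono order_trans zero_le)
    also have "\<dots> \<le> (\<Sum>i. \<kappa> i * blk i t)"
      by (rule ennreal_le_suminf)
    finally show ?thesis .
  qed
  then have "(\<integral>\<^sup>+t. f t \<partial>lborel) \<le> (\<integral>\<^sup>+t. (\<Sum>i. \<kappa> i * blk i t) \<partial>lborel)"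
    by (rule nn_integral_mono)
  also have "\<dots> = (\<Sum>i. \<integral>\<^sup>+t. \<kappa> i * blk i t \<partial>lborel)"
    unfolding blk_def by (rule nn_integral_suminf) measurable
  also have "\<dots> = (\<Sum>i. 2 * \<kappa> i)"
  proof (rule suminf_cong)
    fix i
    have "(\<integral>\<^sup>+t. \<kappa> i * blk i t \<partial>lborel) = \<kappa> i * (\<integral>\<^sup>+t. blk i t \<partial>lborel)"
      unfolding blk_def by (rule nn_integral_cmult) measurable
    also have "(\<integral>\<^sup>+t. blk i t \<partial>lborel) = 2"
      unfolding blk_def by (simp add: nn_integral_add one_add_one)
    finally show "(\<integral>\<^sup>+t. \<kappa> i * blk i t \<partial>lborel) = 2 * \<kappa> i"
      by (simp add: mult.commute)
  qed
  finally show ?thesis .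
qed

lemma abs_mult_le_of_tail_bound:
  fixes t z h :: real
  assumes "0 < h" "0 \<le> z" "real m \<le> \<bar>t\<bar>" "z \<le> exp (1/4) * exp (-(\<bar>t\<bar> powr h / 4))"
  shows "\<bar>t\<bar> * z \<le> exp (1/4) * exp (-(real m powr h / 8))
    * ((real (nat \<lfloor>\<bar>t\<bar>\<rfloor>) + 1) * exp (-(real (nat \<lfloor>\<bar>t\<bar>\<rfloor>) powr h / 8)))"
proof -
  define i where "i = nat \<lfloor>\<bar>t\<bar>\<rfloor>"
  have i: "real i \<le> \<bar>t\<bar>" "\<bar>t\<bar> < real i + 1" "m \<le> i"
    using assms(3) unfolding i_def by linarith+
  have "\<bar>t\<bar> * z \<le> (real i + 1) * (exp (1/4) * exp (-(\<bar>t\<bar> powr h / 4)))"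
    using i assms(2,4) by (intro mult_mono) auto
  also have "exp (-(\<bar>t\<bar> powr h / 4)) \<le> exp (-(real m powr h / 8)) * exp (-(real i powr h / 8))"
  proof -
    have "real m powr h \<le> real i powr h" "real i powr h \<le> \<bar>t\<bar> powr h"
      using i assms(1) by (auto intro: powr_mono2)
    then show ?thesis
      by (simp add: exp_add[symmetric])
  qed
  finally show ?thesis
    unfolding i_def[symmetric] by (simp add: mult_left_mono mult.assoc mult.left_commute)
qed

lemma nn_integral_abs_mult_le:
  fixes Z :: "real \<Rightarrow> real"
  assumes h: "0 < h" and Z_meas: "Z \<in> borel_measurable borel" and Z_nonneg: "\<And>t. 0 \<le> Z t"
    and Z_tail: "\<And>t. real m \<le> \<bar>t\<bar> \<Longrightarrow> Z t \<le> exp (1/4) * exp (-(\<bar>t\<bar> powr h / 4))"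
  shows "(\<integral>\<^sup>+t. ennreal (\<bar>t\<bar> * Z t) \<partial>lborel)
    \<le> ennreal (real m) * (\<integral>\<^sup>+t. ennreal (Z t) \<partial>lborel)
      + ennreal (2 * exp (1/4) * exp (-(real m powr h / 8)) * (\<Sum>i. (real i + 1) * exp (-(real i powr h / 8))))"
proof -
  define c where "c = exp (1/4) * exp (-(real m powr h / 8))"
  define u where "u i = (real i + 1) * exp (-(real i powr h / 8))" for i :: nat
  have u_summable: "summable u"
    using summable_poly_exp_neg_powr[of "1/8" h 1] h unfolding u_def by simp
  define g where "g t = ennreal (\<bar>t\<bar> * Z t) * indicator {t. real m \<le> \<bar>t\<bar>} t" for t
  have split: "ennreal (\<bar>t\<bar> * Z t) \<le> ennreal (real m) * ennreal (Z t) + g t" for t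
  proof (cases "real m \<le> \<bar>t\<bar>")
    case False
    then have "\<bar>t\<bar> * Z t \<le> real m * Z t"
      using Z_nonneg by (intro mult_right_mono) auto
    then have "ennreal (\<bar>t\<bar> * Z t) \<le> ennreal (real m * Z t)"
      by (rule ennreal_leI)
    also have "\<dots> = ennreal (real m) * ennreal (Z t)"
      using Z_nonneg by (simp add: ennreal_mult)
    finally show ?thesis
      by (rule add_increasing2[OF zero_le])
  qed (simp add: g_def)
  have g_le: "g t \<le> ennreal (c * u (nat \<lfloor>\<bar>t\<bar>\<rfloor>))" for t
  proof (cases "real m \<le> \<bar>t\<bar>")
    case True
    then show ?thesis
      using abs_mult_le_of_tail_bound[OF h Z_nonneg True Z_tail[OF True]]
      unfolding g_def c_def u_def by (simp add: ennreal_leI)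
  qed (simp add: g_def)
  have "(\<integral>\<^sup>+t. ennreal (\<bar>t\<bar> * Z t) \<partial>lborel)
      \<le> (\<integral>\<^sup>+t. ennreal (real m) * ennreal (Z t) + g t \<partial>lborel)"
    by (rule nn_integral_mono) (rule split)
  also have "\<dots> = ennreal (real m) * (\<integral>\<^sup>+t. ennreal (Z t) \<partial>lborel) + (\<integral>\<^sup>+t. g t \<partial>lborel)"
    unfolding g_def using Z_meas by (simp add: nn_integral_add nn_integral_cmult)
  also have "(\<integral>\<^sup>+t. g t \<partial>lborel) \<le> (\<Sum>i. 2 * ennreal (c * u i))"
    by (rule nn_integral_le_suminf_unit_blocks) (rule g_le)
  also have "\<dots> = ennreal (\<Sum>i. 2 * c * u i)"
    using u_summable unfolding c_def u_def
    by (subst suminf_ennreal2[symmetric]) (auto simp: ennreal_mult mult.assoc intro: summable_mult)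
  also have "(\<Sum>i. 2 * c * u i) = 2 * c * (\<Sum>i. (real i + 1) * exp (-(real i powr h / 8)))"
    using u_summable unfolding u_def by (simp add: suminf_mult)
  finally show ?thesis
    unfolding c_def by (simp add: add_left_mono mult.assoc)
qed

lemma integral_ge_of_ge_on_unit_interval:
  fixes Z :: "real \<Rightarrow> real"
  assumes "integrable lborel Z" "\<And>t. 0 \<le> Z t" "\<And>t. 0 \<le> t \<Longrightarrow> t \<le> 1 \<Longrightarrow> L \<le> Z t" "0 \<le> L"
  shows "L \<le> (\<integral>t. Z t \<partial>lborel)"
proof -
  have "ennreal L = (\<integral>\<^sup>+t. ennreal L * indicator {0..1::real} t \<partial>lborel)"
    by (subst nn_integral_cmult_indicator) auto
  also have "\<dots> \<le> (\<integral>\<^sup>+t. ennreal (Z t) \<partial>lborel)"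
    using assms(3) by (intro nn_integral_mono) (auto simp: indicator_def ennreal_leI)
  also have "\<dots> = ennreal (\<integral>t. Z t \<partial>lborel)"
    by (rule nn_integral_eq_integral[OF assms(1)]) (simp add: assms(2))
  finally have "ennreal L \<le> ennreal (\<integral>t. Z t \<partial>lborel)" .
  moreover have "0 \<le> (\<integral>t. Z t \<partial>lborel)"
    using assms(2) by simp
  ultimately show ?thesis
    by (simp add: ennreal_le_iff)
qed

lemma abs_integral_mult_normalized_le:
  fixes Z :: "real \<Rightarrow> real"
  assumes Z_meas: "Z \<in> borel_measurable borel" and Z_nonneg: "\<And>t. 0 \<le> Z t"
    and I: "0 < (\<integral>u. Z u \<partial>lborel)" and "0 \<le> a" "0 \<le> T"
    and E: "(\<integral>\<^sup>+t. ennreal (\<bar>t\<bar> * Z t) \<partial>lborel) \<le> ennreal a * (\<integral>\<^sup>+t. ennreal (Z t) \<partial>lborel) + ennreal T"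
  shows "\<bar>\<integral>t. t * (Z t / (\<integral>u. Z u \<partial>lborel)) \<partial>lborel\<bar> \<le> a + T / (\<integral>u. Z u \<partial>lborel)"
proof -
  define I where "I = (\<integral>u. Z u \<partial>lborel)"
  have "integrable lborel Z"
    using I not_integrable_integral_eq by fastforce
  then have Z_int: "(\<integral>\<^sup>+t. ennreal (Z t) \<partial>lborel) = ennreal I"
    unfolding I_def by (rule nn_integral_eq_integral) (simp add: Z_nonneg)
  have "ennreal \<bar>\<integral>t. t * (Z t / I) \<partial>lborel\<bar> \<le> (\<integral>\<^sup>+t. norm (t * (Z t / I)) \<partial>lborel)"
  proof (cases "integrable lborel (\<lambda>t. t * (Z t / I))")
    case True
    then show ?thesis
      using integral_norm_bound_ennreal[OF True] by simp
  next
    case False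
    then have "(\<integral>t. t * (Z t / I) \<partial>lborel) = 0"
      by (rule not_integrable_integral_eq)
    then show ?thesis
      by (simp only: abs_zero ennreal_0 zero_le)
  qed
  also have "\<dots> = (\<integral>\<^sup>+t. ennreal (\<bar>t\<bar> * Z t) * ennreal (1 / I) \<partial>lborel)"
    using I Z_nonneg unfolding I_def[symmetric]
    by (intro nn_integral_cong) (simp add: ennreal_mult[symmetric] abs_mult)
  also have "\<dots> = (\<integral>\<^sup>+t. ennreal (\<bar>t\<bar> * Z t) \<partial>lborel) * ennreal (1 / I)"
    using Z_meas by (intro nn_integral_multc) measurable
  also have "\<dots> \<le> (ennreal a * ennreal I + ennreal T) * ennreal (1 / I)"
    using E unfolding Z_int by (intro mult_right_mono) simp_all
  also have "\<dots> = ennreal (a + T / I)"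
    using I \<open>0 \<le> a\<close> \<open>0 \<le> T\<close> unfolding I_def[symmetric]
    by (simp add: ennreal_mult[symmetric] ennreal_plus[symmetric] field_simps del: ennreal_plus)
  finally have "ennreal \<bar>\<integral>t. t * (Z t / I) \<partial>lborel\<bar> \<le> ennreal (a + T / I)" .
  then show ?thesis
    using I \<open>0 \<le> a\<close> \<open>0 \<le> T\<close> unfolding I_def[symmetric] by (subst (asm) ennreal_le_iff) auto
qed

text \<open>The mass of \<open>Z\<close> on \<open>[0, 1]\<close> is at least \<open>exp (-m powr h / 32 - 1/2)\<close>, which is
  beaten by the factor \<open>exp (-m powr h / 8)\<close> in the tail bound, so the constant does not
  depend on \<open>m\<close>.\<close>
lemma pitman_mean_abs_le:
  fixes w :: "real \<Rightarrow> real"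
  assumes h: "0 < h" and w_meas: "w \<in> borel_measurable borel"
    and w_unit: "\<And>t. 0 \<le> t \<Longrightarrow> t \<le> 1 \<Longrightarrow> \<bar>w t\<bar> \<le> real m powr h / 32"
    and w_tail: "\<And>t. real m \<le> \<bar>t\<bar> \<Longrightarrow> w t \<le> (\<bar>t\<bar> powr h + 1) / 4"
  shows "\<bar>\<integral>t. t * (exp (w t - \<bar>t\<bar> powr h / 2) / (\<integral>u. exp (w u - \<bar>u\<bar> powr h / 2) \<partial>lborel)) \<partial>lborel\<bar>
    \<le> real m + 2 * exp (3/4) * (\<Sum>i. (real i + 1) * exp (-(real i powr h / 8)))"
proof -
  define Z where "Z t = exp (w t - \<bar>t\<bar> powr h / 2)" for t
  define I where "I = (\<integral>u. Z u \<partial>lborel)"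
  define S where "S = (\<Sum>i. (real i + 1) * exp (-(real i powr h / 8)))"
  define L where "L = exp (-(real m powr h / 32) - 1/2)"
  define T where "T = 2 * exp (1/4) * exp (-(real m powr h / 8)) * S"
  have Z_meas: "Z \<in> borel_measurable borel"
    unfolding Z_def using w_meas by measurable
  have Z_nonneg: "0 \<le> Z t" for t
    unfolding Z_def by simp
  have "0 \<le> S"
    using summable_poly_exp_neg_powr[of "1/8" h 1] h unfolding S_def by (auto intro!: suminf_nonneg)
  have "\<bar>\<integral>t. t * (Z t / I) \<partial>lborel\<bar> \<le> real m + 2 * exp (3/4) * S"
  proof (cases "integrable lborel Z")
    case False
    then have "I = 0"
      unfolding I_def by (rule not_integrable_integral_eq)
    then show ?thesis
      using \<open>0 \<le> S\<close> by simp
  next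
    case True
    have "L \<le> Z t" if "0 \<le> t" "t \<le> 1" for t
    proof -
      have "\<bar>t\<bar> powr h \<le> 1"
        using that h by (intro powr_le1) auto
      then show ?thesis
        using w_unit[OF that] unfolding L_def Z_def by simp
    qed
    then have "L \<le> I"
      unfolding I_def by (intro integral_ge_of_ge_on_unit_interval[OF True Z_nonneg]) (auto simp: L_def)
    then have "0 < I"
      using exp_gt_zero[of "-(real m powr h / 32) - 1/2"] unfolding L_def by linarith
    have "Z t \<le> exp (1/4) * exp (-(\<bar>t\<bar> powr h / 4))" if "real m \<le> \<bar>t\<bar>" for t
      using w_tail[OF that] unfolding Z_def by (simp add: exp_add[symmetric])
    then have "(\<integral>\<^sup>+t. ennreal (\<bar>t\<bar> * Z t) \<partial>lborel) \<le> ennreal (real m) * (\<integral>\<^sup>+t. ennreal (Z t) \<partial>lborel) + ennreal T"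
      unfolding T_def S_def by (rule nn_integral_abs_mult_le[OF h Z_meas Z_nonneg])
    then have "\<bar>\<integral>t. t * (Z t / I) \<partial>lborel\<bar> \<le> real m + T / I"
      unfolding I_def using \<open>0 < I\<close> \<open>0 \<le> S\<close>
      by (intro abs_integral_mult_normalized_le[OF Z_meas Z_nonneg]) (auto simp: I_def T_def)
    also have "T / I \<le> T / L"
      using \<open>L \<le> I\<close> \<open>0 \<le> S\<close> \<open>0 < I\<close> unfolding L_def T_def by (intro divide_left_mono) auto
    also have "T / L = 2 * exp (3/4) * (exp (-(real m powr h / 8) + real m powr h / 32) * S)"
      unfolding T_def L_def by (simp add: exp_add[symmetric] exp_diff[symmetric] field_simps)
    also have "\<dots> \<le> 2 * exp (3/4) * (1 * S)"
      using \<open>0 \<le> S\<close> by (intro mult_left_mono mult_right_mono) auto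
    finally show ?thesis
      by simp
  qed
  then show ?thesis
    unfolding Z_def I_def S_def .
qed

lemma pitman_zeta_abs_le_off_bad_event:
  assumes "is_fbm M H W" "0 < H" "H \<le> 1" "\<omega> \<in> space M" "\<omega> \<notin> fbm_bad_event M W (2*H) m"
  shows "\<bar>pitman_zeta H W \<omega>\<bar> \<le> real m + 2 * exp (3/4) * (\<Sum>i. (real i + 1) * exp (-(real i powr (2*H) / 8)))"
proof -
  have "(\<lambda>t. W t \<omega>) \<in> borel_measurable borel"
    by (rule borel_measurable_continuous_onI) (rule is_fbmD(3)[OF assms(1,4)])
  then show ?thesis
    unfolding pitman_zeta_def fbm_q_def fbm_Z_def
    using fbm_bounds_off_bad_event[OF assms] assms(2)
    by (intro pitman_mean_abs_le) auto
qed

section \<open>Exponential moments\<close>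

lemma summable_exp_shifted_powr:
  assumes h: "0 < h" "h \<le> 2" and "0 \<le> d" "4 * d < \<beta>" "0 \<le> c"
  shows "summable (\<lambda>k::nat. exp (d * (real k + 1 + c) powr h) * exp (-(\<beta> * (real k + 1) powr h)))"
proof (rule summable_comparison_test'[where N = 0])
  show "summable (\<lambda>k::nat. exp (4 * d * c powr h) * ((real k + 1) ^ 0 * exp (-((\<beta> - 4 * d) * real k powr h))))"
    using assms by (intro summable_mult summable_poly_exp_neg_powr) auto
  fix k :: nat
  have "d * (real k + 1 + c) powr h \<le> d * (4 * ((real k + 1) powr h + c powr h))"
    using assms by (intro mult_left_mono powr_add_le_four) auto
  moreover have "(\<beta> - 4 * d) * real k powr h \<le> (\<beta> - 4 * d) * (real k + 1) powr h"
    using assms by (intro mult_left_mono powr_mono2) auto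
  ultimately have "d * (real k + 1 + c) powr h - \<beta> * (real k + 1) powr h
      \<le> 4 * d * c powr h - (\<beta> - 4 * d) * real k powr h"
    by (simp add: algebra_simps)
  then show "norm (exp (d * (real k + 1 + c) powr h) * exp (-(\<beta> * (real k + 1) powr h)))
      \<le> exp (4 * d * c powr h) * ((real k + 1) ^ 0 * exp (-((\<beta> - 4 * d) * real k powr h)))"
    by (simp add: exp_add[symmetric] exp_diff[symmetric])
qed

lemma exp_powr_le_suminf_indicator:
  fixes z d h C :: real
  assumes "0 \<le> d" "0 < h" "0 \<le> C"
    and outside: "\<And>m. 1 \<le> m \<Longrightarrow> \<omega> \<notin> B m \<Longrightarrow> \<bar>z\<bar> \<le> real m + C"
  shows "ennreal (exp (d * \<bar>z\<bar> powr h)) \<le> ennreal (exp (d * (1 + C) powr h))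
    + (\<Sum>k. ennreal (exp (d * (real k + 1 + (1 + C)) powr h)) * indicator (B (Suc k)) \<omega>)"
proof (cases "\<bar>z\<bar> \<le> 1 + C")
  case True
  then have "exp (d * \<bar>z\<bar> powr h) \<le> exp (d * (1 + C) powr h)"
    using assms by (intro exp_mono mult_left_mono powr_mono2) auto
  then show ?thesis
    by (intro add_increasing2) (auto intro: ennreal_leI)
next
  case False
  define k where "k = nat \<lceil>\<bar>z\<bar> - C\<rceil> - 2"
  have k: "real (Suc k) + C < \<bar>z\<bar>" "\<bar>z\<bar> \<le> real k + 1 + (1 + C)"
    using False unfolding k_def by linarith+
  have "\<omega> \<in> B (Suc k)"
  proof (rule ccontr)
    assume "\<omega> \<notin> B (Suc k)"
    then have "\<bar>z\<bar> \<le> real (Suc k) + C"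
      by (intro outside) simp_all
    with k show False
      by linarith
  qed
  have "exp (d * \<bar>z\<bar> powr h) \<le> exp (d * (real k + 1 + (1 + C)) powr h)"
    using k assms by (intro exp_mono mult_left_mono powr_mono2) auto
  then have "ennreal (exp (d * \<bar>z\<bar> powr h))
      \<le> ennreal (exp (d * (real k + 1 + (1 + C)) powr h)) * indicator (B (Suc k)) \<omega>"
    using \<open>\<omega> \<in> B (Suc k)\<close> by (simp add: ennreal_leI)
  also have "\<dots> \<le> (\<Sum>k. ennreal (exp (d * (real k + 1 + (1 + C)) powr h)) * indicator (B (Suc k)) \<omega>)"
    by (rule ennreal_le_suminf)
  finally show ?thesis
    by (rule add_increasing[OF zero_le])
qed

text \<open>Outside \<open>B m\<close> the integrand is at most \<open>exp (\<delta> (m + 1 + C) powr h)\<close>, and these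
  values grow slower than the probabilities of \<open>B m\<close> decay as long as \<open>4 \<delta> < \<beta>\<close>.\<close>
lemma nn_integral_exp_powr_finite:
  assumes "prob_space M" and h: "0 < h" "h \<le> 2" and "0 \<le> C" "0 < \<beta>" "4 * \<delta> < \<beta>"
    and B_sets: "\<And>m. B m \<in> sets M"
    and B_prob: "\<And>m. 1 \<le> m \<Longrightarrow> measure M (B m) \<le> A * exp (-(\<beta> * real m powr h))"
    and Z: "\<And>\<omega> m. \<omega> \<in> space M \<Longrightarrow> 1 \<le> m \<Longrightarrow> \<omega> \<notin> B m \<Longrightarrow> \<bar>Z \<omega>\<bar> \<le> real m + C"
  shows "(\<integral>\<^sup>+\<omega>. ennreal (exp (\<delta> * \<bar>Z \<omega>\<bar> powr h)) \<partial>M) < \<infinity>"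
proof -
  interpret prob_space M by fact
  define d where "d = max \<delta> 0"
  have d: "0 \<le> d" "4 * d < \<beta>"
    using \<open>0 < \<beta>\<close> \<open>4 * \<delta> < \<beta>\<close> unfolding d_def by auto
  have "0 \<le> A * exp (-(\<beta> * real 1 powr h))"
    using B_prob[of 1] measure_nonneg[of M "B 1"] by linarith
  then have "0 \<le> A"
    by (simp add: zero_le_mult_iff)
  define e0 where "e0 = exp (d * (1 + C) powr h)"
  define a where "a k = exp (d * (real k + 1 + (1 + C)) powr h)" for k :: nat
  have pointwise: "ennreal (exp (\<delta> * \<bar>Z \<omega>\<bar> powr h))
      \<le> ennreal e0 + (\<Sum>k. ennreal (a k) * indicator (B (Suc k)) \<omega>)" if "\<omega> \<in> space M" for \<omega>
  proof -
    have "exp (\<delta> * \<bar>Z \<omega>\<bar> powr h) \<le> exp (d * \<bar>Z \<omega>\<bar> powr h)"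
      unfolding d_def by (intro exp_mono mult_right_mono) auto
    then have "ennreal (exp (\<delta> * \<bar>Z \<omega>\<bar> powr h)) \<le> ennreal (exp (d * \<bar>Z \<omega>\<bar> powr h))"
      by (rule ennreal_leI)
    also have "\<dots> \<le> ennreal e0 + (\<Sum>k. ennreal (a k) * indicator (B (Suc k)) \<omega>)"
      unfolding e0_def a_def
      by (rule exp_powr_le_suminf_indicator[OF d(1) h(1) \<open>0 \<le> C\<close> Z[OF that]])
    finally show ?thesis .
  qed
  define b where "b k = a k * (A * exp (-(\<beta> * (real k + 1) powr h)))" for k
  have b_summable: "summable b"
    using summable_mult[OF summable_exp_shifted_powr[OF h d, of "1 + C"], of A] \<open>0 \<le> C\<close>
    unfolding b_def a_def by (simp add: ac_simps)
  have "(\<integral>\<^sup>+\<omega>. ennreal (exp (\<delta> * \<bar>Z \<omega>\<bar> powr h)) \<partial>M)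
      \<le> (\<integral>\<^sup>+\<omega>. ennreal e0 + (\<Sum>k. ennreal (a k) * indicator (B (Suc k)) \<omega>) \<partial>M)"
    by (rule nn_integral_mono) (rule pointwise)
  also have "\<dots> = ennreal e0 + (\<Sum>k. ennreal (a k) * emeasure M (B (Suc k)))"
    using B_sets by (simp add: nn_integral_add nn_integral_suminf nn_integral_cmult_indicator emeasure_space_1)
  also have "(\<Sum>k. ennreal (a k) * emeasure M (B (Suc k))) \<le> (\<Sum>k. ennreal (b k))"
  proof (rule suminf_le)
    fix k
    have "a k * measure M (B (Suc k)) \<le> b k"
      unfolding b_def using B_prob[of "Suc k"] by (intro mult_left_mono) (auto simp: a_def add.commute)
    then show "ennreal (a k) * emeasure M (B (Suc k)) \<le> ennreal (b k)"
      by (simp add: emeasure_eq_measure ennreal_mult[symmetric] a_def ennreal_leI)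
  qed auto
  also have "(\<Sum>k. ennreal (b k)) = ennreal (\<Sum>k. b k)"
    using b_summable \<open>0 \<le> A\<close> unfolding b_def a_def by (intro suminf_ennreal2) auto
  finally show ?thesis
    by (simp add: add_left_mono order_le_less_trans)
qed

theorem theorem1:
  fixes M :: "'a measure" and W :: "real \<Rightarrow> 'a \<Rightarrow> real" and H :: real
  assumes "0 < H" "H \<le> 1" "is_fbm M H W"
  shows "\<exists>\<alpha>>0. \<forall>\<delta><\<alpha>.
           (\<integral>\<^sup>+\<omega>. ennreal (exp (\<delta> * \<bar>pitman_zeta H W \<omega>\<bar> powr (2*H))) \<partial>M) < \<infinity>"
proof -
  obtain A \<beta> where "0 < \<beta>" and bad_prob:
    "\<And>m. 1 \<le> m \<Longrightarrow> measure M (fbm_bad_event M W (2*H) m) \<le> A * exp (-(\<beta> * real m powr (2*H)))"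
    using fbm_bad_event_prob[OF assms(3,1,2)] by blast
  define C where "C = 2 * exp (3/4) * (\<Sum>i. (real i + 1) * exp (-(real i powr (2*H) / 8)))"
  have "0 \<le> C"
    using summable_poly_exp_neg_powr[of "1/8" "2*H" 1] assms(1)
    unfolding C_def by (auto intro!: mult_nonneg_nonneg suminf_nonneg)
  have "(\<integral>\<^sup>+\<omega>. ennreal (exp (\<delta> * \<bar>pitman_zeta H W \<omega>\<bar> powr (2*H))) \<partial>M) < \<infinity>" if "\<delta> < \<beta> / 4" for \<delta>
  proof (rule nn_integral_exp_powr_finite[OF is_fbmD(1)[OF assms(3)] _ _ \<open>0 \<le> C\<close> \<open>0 < \<beta>\<close>])
    show "fbm_bad_event M W (2*H) m \<in> sets M" for m
      by (rule fbm_bad_event_sets[OF is_fbmD(2)[OF assms(3)]])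
    show "\<bar>pitman_zeta H W \<omega>\<bar> \<le> real m + C"
      if "\<omega> \<in> space M" "\<omega> \<notin> fbm_bad_event M W (2*H) m" for \<omega> m
      unfolding C_def using pitman_zeta_abs_le_off_bad_event[OF assms(3,1,2) that] .
  qed (use assms(1,2) \<open>\<delta> < \<beta> / 4\<close> bad_prob in auto)
  moreover have "0 < \<beta> / 4"
    using \<open>0 < \<beta>\<close> by simp
  ultimately show ?thesis
    by blast
qed

end
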